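(* Under the standing assumptions below, one of the following holds: (I') there exist maps $u_1:M\to M'$ and $v_1:N\to N'$ such that for all $m\in M$, $n\in N$: $\phi\left(\left[\begin{smallmatrix} 1 & m\\ 0 & 0\end{smallmatrix}\right]\right)=\left[\begin{smallmatrix} 1 & u_1(m)\\ v_1(0) & 0\end{smallmatrix}\right]$ and $\phi\left(\left[\begin{smallmatrix} 1 & 0\\ n & 0\end{smallmatrix}\right]\right)=\left[\begin{smallmatrix} 1 & u_1(0)\\ v_1(n) & 0\end{smallmatrix}\right]$; (I'') there exist maps $u_2:N\to M'$ and $v_2:M\to N'$ such that for all $m\in M$, $n\in N$: $\phi\left(\left[\begin{smallmatrix} 1 & m\\ 0 & 0\end{smallmatrix}\right]\right)=\left[\begin{smallmatrix} 0 & u_2(0)\\ v_2(m) & 1\end{smallmatrix}\right]$ and $\phi\left(\left[\begin{smallmatrix} 1 & 0\\ n & 0\end{smallmatrix}\right]\right)=\left[\begin{smallmatrix} 0 & u_2(n)\\ v_2(0) & 1\end{smallmatrix}\right]$.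
   Context: All rings have an identity $1\neq 0$. Standing assumptions: $R,S,R',S'$ are rings whose only idempotents are $0$ and $1$; $M$ is an $R$-$S$-bimodule, $N$ an $S$-$R$-bimodule, $M'$ an $R'$-$S'$-bimodule, $N'$ an $S'$-$R'$-bimodule; $T=\left[\begin{smallmatrix} R & M\\ N & S\end{smallmatrix}\right]$ and $T'=\left[\begin{smallmatrix} R' & M'\\ N' & S'\end{smallmatrix}\right]$ are the Morita context rings with both Morita maps zero, i.e. the sets of formal matrices with entrywise addition and product $\left[\begin{smallmatrix} r & m\\ n & s\end{smallmatrix}\right]\left[\begin{smallmatrix} r' & m'\\ n' & s'\end{smallmatrix}\right]=\left[\begin{smallmatrix} rr' & rm'+ms'\\ nr'+sn' & ss'\end{smallmatrix}\right]$; and $\phi:T\to T'$ is a ring isomorphism. *)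

theory Defs
  imports Main
begin

definition nontriv_ring_trivial_idem :: "'r::ring_1 itself \<Rightarrow> bool" where
  "nontriv_ring_trivial_idem _ \<longleftrightarrow> (1::'r) \<noteq> 0 \<and> (\<forall>e::'r. e * e = e \<longrightarrow> e = 0 \<or> e = 1)"

definition bimodule ::
  "('a::ring_1 \<Rightarrow> 'm::ab_group_add \<Rightarrow> 'm) \<Rightarrow> ('m \<Rightarrow> 'b::ring_1 \<Rightarrow> 'm) \<Rightarrow> bool" where
  "bimodule l r \<longleftrightarrow>
     (\<forall>a x y. l a (x + y) = l a x + l a y) \<and>
     (\<forall>a a' x. l (a + a') x = l a x + l a' x) \<and>
     (\<forall>a a' x. l (a * a') x = l a (l a' x)) \<and>
     (\<forall>x. l 1 x = x) \<and>
     (\<forall>b x y. r (x + y) b = r x b + r y b) \<and>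
     (\<forall>b b' x. r x (b + b') = r x b + r x b') \<and>
     (\<forall>b b' x. r x (b * b') = r (r x b) b') \<and>
     (\<forall>x. r x 1 = x) \<and>
     (\<forall>a b x. l a (r x b) = r (l a x) b)"

text \<open>Morita context ring T = [R M; N S] with both Morita maps zero; elements are
  quadruples (r, m, n, s) standing for the matrix [r m; n s].
  lM, rM: the left R- and right S-actions on M; lN, rN: the left S- and right R-actions on N.\<close>
type_synonym ('r,'m,'n,'s) morita = "'r \<times> 'm \<times> 'n \<times> 's"

definition morita_add ::
  "('r::ring_1,'m::ab_group_add,'n::ab_group_add,'s::ring_1) morita \<Rightarrow> ('r,'m,'n,'s) morita \<Rightarrow> ('r,'m,'n,'s) morita" where
  "morita_add x y = (case x of (r,m,n,s) \<Rightarrow> case y of (r',m',n',s') \<Rightarrow>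
     (r + r', m + m', n + n', s + s'))"

definition morita_mult ::
  "('r::ring_1 \<Rightarrow> 'm::ab_group_add \<Rightarrow> 'm) \<Rightarrow> ('m \<Rightarrow> 's::ring_1 \<Rightarrow> 'm) \<Rightarrow>
   ('s \<Rightarrow> 'n::ab_group_add \<Rightarrow> 'n) \<Rightarrow> ('n \<Rightarrow> 'r \<Rightarrow> 'n) \<Rightarrow>
   ('r,'m,'n,'s) morita \<Rightarrow> ('r,'m,'n,'s) morita \<Rightarrow> ('r,'m,'n,'s) morita" where
  "morita_mult lM rM lN rN x y = (case x of (r,m,n,s) \<Rightarrow> case y of (r',m',n',s') \<Rightarrow>
     (r * r', lM r m' + rM m s', rN n r' + lN s n', s * s'))"

definition morita_one :: "('r::ring_1,'m::ab_group_add,'n::ab_group_add,'s::ring_1) morita" where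
  "morita_one = (1, 0, 0, 1)"

definition morita_ring_iso ::
  "('r::ring_1 \<Rightarrow> 'm::ab_group_add \<Rightarrow> 'm) \<Rightarrow> ('m \<Rightarrow> 's::ring_1 \<Rightarrow> 'm) \<Rightarrow>
   ('s \<Rightarrow> 'n::ab_group_add \<Rightarrow> 'n) \<Rightarrow> ('n \<Rightarrow> 'r \<Rightarrow> 'n) \<Rightarrow>
   ('r2::ring_1 \<Rightarrow> 'm2::ab_group_add \<Rightarrow> 'm2) \<Rightarrow> ('m2 \<Rightarrow> 's2::ring_1 \<Rightarrow> 'm2) \<Rightarrow>
   ('s2 \<Rightarrow> 'n2::ab_group_add \<Rightarrow> 'n2) \<Rightarrow> ('n2 \<Rightarrow> 'r2 \<Rightarrow> 'n2) \<Rightarrow>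
   (('r,'m,'n,'s) morita \<Rightarrow> ('r2,'m2,'n2,'s2) morita) \<Rightarrow> bool" where
  "morita_ring_iso lM rM lN rN lM' rM' lN' rN' \<phi> \<longleftrightarrow>
     bij \<phi> \<and>
     (\<forall>x y. \<phi> (morita_add x y) = morita_add (\<phi> x) (\<phi> y)) \<and>
     (\<forall>x y. \<phi> (morita_mult lM rM lN rN x y) = morita_mult lM' rM' lN' rN' (\<phi> x) (\<phi> y)) \<and>
     \<phi> morita_one = morita_one"

end

theory Submission
  imports Defs
begin

(* The proof follows the Peirce decomposition with respect to e11 = [1 0; 0 0].

   (1) E = phi(e11) is an idempotent of T' different from 0 and 1, since phi is injective and
       preserves 0 and 1.  Its diagonal entries are idempotents of R' and S', and a short
       computation shows that E = [1 a; b 0] or E = [0 a; b 1].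
   (2) X = phi [0 m; 0 0] satisfies E X = X and X E = 0, while Y = phi [0 0; n 0] satisfies
       E Y = 0 and Y E = Y, because the same identities hold for the preimages in T.
   (3) In T', these one-sided absorption identities force X and Y to be concentrated in a
       single off-diagonal corner, namely M' or N' according to the shape of E.
   Since [1 m; 0 0] = e11 + [0 m; 0 0] and [1 0; n 0] = e11 + [0 0; n 0], the images
   phi [1 m; 0 0] and phi [1 0; n 0] are E plus an off-diagonal term, which is the dichotomy
   (I') / (I'') of the theorem. *)

lemma bimodule_zero_laws:
  assumes "bimodule l r"
  shows "l 0 x = 0" "l a 0 = 0" "r x 0 = 0" "r 0 b = 0" "l 1 x = x" "r x 1 = x"
proof -
  have add: "\<And>a x y. l a (x + y) = l a x + l a y" "\<And>a a' x. l (a + a') x = l a x + l a' x"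
    "\<And>b x y. r (x + y) b = r x b + r y b" "\<And>b b' x. r x (b + b') = r x b + r x b'"
    using assms unfolding bimodule_def by simp_all
  have "l (0 + 0) x = l 0 x + l 0 x" by (rule add(2))
  then show "l 0 x = 0" by simp
  have "l a (0 + 0) = l a 0 + l a 0" by (rule add(1))
  then show "l a 0 = 0" by simp
  have "r x (0 + 0) = r x 0 + r x 0" by (rule add(4))
  then show "r x 0 = 0" by simp
  have "r (0 + 0) b = r 0 b + r 0 b" by (rule add(3))
  then show "r 0 b = 0" by simp
  show "l 1 x = x" "r x 1 = x" using assms unfolding bimodule_def by blast+
qed

lemma trivial_idem_cases:
  assumes "nontriv_ring_trivial_idem TYPE('r::ring_1)" and "(e::'r) * e = e"
  shows "e = 0 \<or> e = 1"
  using assms unfolding nontriv_ring_trivial_idem_def by blast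

lemma trivial_idem_one_neq_zero:
  assumes "nontriv_ring_trivial_idem TYPE('r::ring_1)"
  shows "(1::'r) \<noteq> 0"
  using assms unfolding nontriv_ring_trivial_idem_def by blast

lemma morita_ring_iso_zero:
  assumes "morita_ring_iso lM rM lN rN lM' rM' lN' rN' \<phi>"
  shows "\<phi> (0, 0, 0, 0) = (0, 0, 0, 0)"
proof -
  have "\<phi> (morita_add (0, 0, 0, 0) (0, 0, 0, 0)) = morita_add (\<phi> (0, 0, 0, 0)) (\<phi> (0, 0, 0, 0))"
    using assms unfolding morita_ring_iso_def by blast
  then show ?thesis by (cases "\<phi> (0, 0, 0, 0)") (simp add: morita_add_def)
qed

(* A nontrivial idempotent [a1 a; b a2] of a Morita ring over corner rings with trivial
   idempotents has diagonal (1,0) or (0,1): both corners are 0 or 1, and the diagonal (0,0)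
   resp. (1,1) forces a = b = 0, i.e. the idempotent would be 0 resp. 1. *)
lemma morita_idempotent_diagonal:
  fixes lM :: "'r::ring_1 \<Rightarrow> 'm::ab_group_add \<Rightarrow> 'm" and rM :: "'m \<Rightarrow> 's::ring_1 \<Rightarrow> 'm"
    and lN :: "'s \<Rightarrow> 'n::ab_group_add \<Rightarrow> 'n" and rN :: "'n \<Rightarrow> 'r \<Rightarrow> 'n"
  assumes "nontriv_ring_trivial_idem TYPE('r)" and "nontriv_ring_trivial_idem TYPE('s)"
    and bM: "bimodule lM rM" and bN: "bimodule lN rN"
    and idem: "morita_mult lM rM lN rN (a1, a, b, a2) (a1, a, b, a2) = (a1, a, b, a2)"
    and ne0: "(a1, a, b, a2) \<noteq> (0, 0, 0, 0)" and ne1: "(a1, a, b, a2) \<noteq> (1, 0, 0, 1)"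
  shows "(a1 = 1 \<and> a2 = 0) \<or> (a1 = 0 \<and> a2 = 1)"
proof -
  have corners: "a1 * a1 = a1" "a2 * a2 = a2"
    and off: "lM a1 a + rM a a2 = a" "rN b a1 + lN a2 b = b"
    using idem by (simp_all add: morita_mult_def)
  have "a1 = 0 \<or> a1 = 1" "a2 = 0 \<or> a2 = 1"
    using trivial_idem_cases assms(1,2) corners by blast+
  moreover have "\<not> (a1 = 0 \<and> a2 = 0)"
  proof
    assume "a1 = 0 \<and> a2 = 0"
    with off have "a = 0" "b = 0" by (simp_all add: bimodule_zero_laws[OF bM] bimodule_zero_laws[OF bN])
    with ne0 \<open>a1 = 0 \<and> a2 = 0\<close> show False by simp
  qed
  moreover have "\<not> (a1 = 1 \<and> a2 = 1)"
  proof
    assume "a1 = 1 \<and> a2 = 1"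
    with off have "a + a = a" "b + b = b"
      by (simp_all add: bimodule_zero_laws[OF bM] bimodule_zero_laws[OF bN])
    then have "a = 0" "b = 0" by simp_all
    with ne1 \<open>a1 = 1 \<and> a2 = 1\<close> show False by simp
  qed
  ultimately show ?thesis by blast
qed

lemma peirce_components_upper:
  assumes bM: "bimodule lM rM" and bN: "bimodule lN rN"
  shows "morita_mult lM rM lN rN (1, a, b, 0) X = X \<Longrightarrow> morita_mult lM rM lN rN X (1, a, b, 0) = (0, 0, 0, 0)
           \<Longrightarrow> \<exists>x. X = (0, x, 0, 0)"
    and "morita_mult lM rM lN rN (1, a, b, 0) X = (0, 0, 0, 0) \<Longrightarrow> morita_mult lM rM lN rN X (1, a, b, 0) = X
           \<Longrightarrow> \<exists>y. X = (0, 0, y, 0)"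
  by (cases X; auto simp: morita_mult_def bimodule_zero_laws[OF bM] bimodule_zero_laws[OF bN])+

lemma peirce_components_lower:
  assumes bM: "bimodule lM rM" and bN: "bimodule lN rN"
  shows "morita_mult lM rM lN rN (0, a, b, 1) X = X \<Longrightarrow> morita_mult lM rM lN rN X (0, a, b, 1) = (0, 0, 0, 0)
           \<Longrightarrow> \<exists>y. X = (0, 0, y, 0)"
    and "morita_mult lM rM lN rN (0, a, b, 1) X = (0, 0, 0, 0) \<Longrightarrow> morita_mult lM rM lN rN X (0, a, b, 1) = X
           \<Longrightarrow> \<exists>x. X = (0, x, 0, 0)"
  by (cases X; auto simp: morita_mult_def bimodule_zero_laws[OF bM] bimodule_zero_laws[OF bN])+

lemma iso_image_e11:
  fixes \<phi> :: "('r::ring_1,'m::ab_group_add,'n::ab_group_add,'s::ring_1) morita \<Rightarrow> ('r2::ring_1,'m2::ab_group_add,'n2::ab_group_add,'s2::ring_1) morita"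
  assumes "nontriv_ring_trivial_idem TYPE('r)" and "nontriv_ring_trivial_idem TYPE('s)"
    and bM: "bimodule lM rM" and bN: "bimodule lN rN"
    and iso: "morita_ring_iso lM rM lN rN lM' rM' lN' rN' \<phi>"
  shows "morita_mult lM' rM' lN' rN' (\<phi> (1, 0, 0, 0)) (\<phi> (1, 0, 0, 0)) = \<phi> (1, 0, 0, 0)"
    and "\<phi> (1, 0, 0, 0) \<noteq> (0, 0, 0, 0)" and "\<phi> (1, 0, 0, 0) \<noteq> (1, 0, 0, 1)"
proof -
  have inj: "inj \<phi>" and one: "\<phi> (1, 0, 0, 1) = (1, 0, 0, 1)"
    and mult: "\<And>x y. \<phi> (morita_mult lM rM lN rN x y) = morita_mult lM' rM' lN' rN' (\<phi> x) (\<phi> y)"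
    using iso unfolding morita_ring_iso_def morita_one_def by (auto simp: bij_is_inj)
  have "morita_mult lM rM lN rN (1, 0, 0, 0) (1, 0, 0, 0) = (1, 0, 0, 0)"
    by (simp add: morita_mult_def bimodule_zero_laws[OF bM] bimodule_zero_laws[OF bN])
  then show "morita_mult lM' rM' lN' rN' (\<phi> (1, 0, 0, 0)) (\<phi> (1, 0, 0, 0)) = \<phi> (1, 0, 0, 0)"
    by (metis mult)
  have "(1::'r, 0::'m, 0::'n, 0::'s) \<noteq> (0, 0, 0, 0)" "(1::'r, 0::'m, 0::'n, 0::'s) \<noteq> (1, 0, 0, 1)"
    using trivial_idem_one_neq_zero assms(1,2) by auto
  then show "\<phi> (1, 0, 0, 0) \<noteq> (0, 0, 0, 0)" "\<phi> (1, 0, 0, 0) \<noteq> (1, 0, 0, 1)"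
    using inj one morita_ring_iso_zero[OF iso] by (metis injD)+
qed

(* In T, [0 m; 0 0] is absorbed by e11 on the left and killed on the right, and
   [0 0; n 0] the other way round; [1 m; 0 0] and [1 0; n 0] are e11 plus these elements.
   The isomorphism carries all of this over to E = phi(e11). *)
lemma iso_image_off_diagonal:
  assumes bM: "bimodule lM rM" and bN: "bimodule lN rN"
    and iso: "morita_ring_iso lM rM lN rN lM' rM' lN' rN' \<phi>"
  defines "E \<equiv> \<phi> (1, 0, 0, 0)"
  shows "morita_mult lM' rM' lN' rN' E (\<phi> (0, m, 0, 0)) = \<phi> (0, m, 0, 0)"
    and "morita_mult lM' rM' lN' rN' (\<phi> (0, m, 0, 0)) E = (0, 0, 0, 0)"
    and "\<phi> (1, m, 0, 0) = morita_add E (\<phi> (0, m, 0, 0))"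
    and "morita_mult lM' rM' lN' rN' E (\<phi> (0, 0, n, 0)) = (0, 0, 0, 0)"
    and "morita_mult lM' rM' lN' rN' (\<phi> (0, 0, n, 0)) E = \<phi> (0, 0, n, 0)"
    and "\<phi> (1, 0, n, 0) = morita_add E (\<phi> (0, 0, n, 0))"
proof -
  have add: "\<And>x y. \<phi> (morita_add x y) = morita_add (\<phi> x) (\<phi> y)"
    and mult: "\<And>x y. \<phi> (morita_mult lM rM lN rN x y) = morita_mult lM' rM' lN' rN' (\<phi> x) (\<phi> y)"
    using iso unfolding morita_ring_iso_def by auto
  note zero = morita_ring_iso_zero[OF iso]
  note laws = bimodule_zero_laws[OF bM] bimodule_zero_laws[OF bN]
  have "morita_mult lM rM lN rN (1, 0, 0, 0) (0, m, 0, 0) = (0, m, 0, 0)"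
    "morita_mult lM rM lN rN (0, m, 0, 0) (1, 0, 0, 0) = (0, 0, 0, 0)"
    "morita_mult lM rM lN rN (1, 0, 0, 0) (0, 0, n, 0) = (0, 0, 0, 0)"
    "morita_mult lM rM lN rN (0, 0, n, 0) (1, 0, 0, 0) = (0, 0, n, 0)"
    by (simp_all add: morita_mult_def laws)
  then show "morita_mult lM' rM' lN' rN' E (\<phi> (0, m, 0, 0)) = \<phi> (0, m, 0, 0)"
    "morita_mult lM' rM' lN' rN' (\<phi> (0, m, 0, 0)) E = (0, 0, 0, 0)"
    "morita_mult lM' rM' lN' rN' E (\<phi> (0, 0, n, 0)) = (0, 0, 0, 0)"
    "morita_mult lM' rM' lN' rN' (\<phi> (0, 0, n, 0)) E = \<phi> (0, 0, n, 0)"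
    unfolding E_def by (metis mult, metis mult zero, metis mult zero, metis mult)
  show "\<phi> (1, m, 0, 0) = morita_add E (\<phi> (0, m, 0, 0))"
    using add[of "(1, 0, 0, 0)" "(0, m, 0, 0)"] unfolding E_def by (simp add: morita_add_def)
  show "\<phi> (1, 0, n, 0) = morita_add E (\<phi> (0, 0, n, 0))"
    using add[of "(1, 0, 0, 0)" "(0, 0, n, 0)"] unfolding E_def by (simp add: morita_add_def)
qed

lemma iso_images_upper:
  assumes bM: "bimodule lM rM" and bN: "bimodule lN rN"
    and bM': "bimodule lM' rM'" and bN': "bimodule lN' rN'"
    and iso: "morita_ring_iso lM rM lN rN lM' rM' lN' rN' \<phi>"
    and E: "\<phi> (1, 0, 0, 0) = (1, a, b, 0)"
  shows "\<exists>x. \<phi> (1, m, 0, 0) = (1, x, b, 0)" and "\<exists>y. \<phi> (1, 0, n, 0) = (1, a, y, 0)"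
proof -
  note off = iso_image_off_diagonal[OF bM bN iso, unfolded E]
  obtain x where "\<phi> (0, m, 0, 0) = (0, x, 0, 0)"
    using peirce_components_upper(1)[OF bM' bN' off(1,2)] by blast
  then show "\<exists>x. \<phi> (1, m, 0, 0) = (1, x, b, 0)" using off(3)[of m] by (simp add: morita_add_def)
  obtain y where "\<phi> (0, 0, n, 0) = (0, 0, y, 0)"
    using peirce_components_upper(2)[OF bM' bN' off(4,5)] by blast
  then show "\<exists>y. \<phi> (1, 0, n, 0) = (1, a, y, 0)" using off(6)[of n] by (simp add: morita_add_def)
qed

lemma iso_images_lower:
  assumes bM: "bimodule lM rM" and bN: "bimodule lN rN"
    and bM': "bimodule lM' rM'" and bN': "bimodule lN' rN'"
    and iso: "morita_ring_iso lM rM lN rN lM' rM' lN' rN' \<phi>"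
    and E: "\<phi> (1, 0, 0, 0) = (0, a, b, 1)"
  shows "\<exists>y. \<phi> (1, m, 0, 0) = (0, a, y, 1)" and "\<exists>x. \<phi> (1, 0, n, 0) = (0, x, b, 1)"
proof -
  note off = iso_image_off_diagonal[OF bM bN iso, unfolded E]
  obtain y where "\<phi> (0, m, 0, 0) = (0, 0, y, 0)"
    using peirce_components_lower(1)[OF bM' bN' off(1,2)] by blast
  then show "\<exists>y. \<phi> (1, m, 0, 0) = (0, a, y, 1)" using off(3)[of m] by (simp add: morita_add_def)
  obtain x where "\<phi> (0, 0, n, 0) = (0, x, 0, 0)"
    using peirce_components_lower(2)[OF bM' bN' off(4,5)] by blast
  then show "\<exists>x. \<phi> (1, 0, n, 0) = (0, x, b, 1)" using off(6)[of n] by (simp add: morita_add_def)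
qed

theorem corollary4p5:
  fixes lM :: "'r::ring_1 \<Rightarrow> 'm::ab_group_add \<Rightarrow> 'm" and rM :: "'m \<Rightarrow> 's::ring_1 \<Rightarrow> 'm"
    and lN :: "'s \<Rightarrow> 'n::ab_group_add \<Rightarrow> 'n" and rN :: "'n \<Rightarrow> 'r \<Rightarrow> 'n"
    and lM' :: "'r2::ring_1 \<Rightarrow> 'm2::ab_group_add \<Rightarrow> 'm2" and rM' :: "'m2 \<Rightarrow> 's2::ring_1 \<Rightarrow> 'm2"
    and lN' :: "'s2 \<Rightarrow> 'n2::ab_group_add \<Rightarrow> 'n2" and rN' :: "'n2 \<Rightarrow> 'r2 \<Rightarrow> 'n2"
    and \<phi> :: "('r,'m,'n,'s) morita \<Rightarrow> ('r2,'m2,'n2,'s2) morita"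
  assumes "nontriv_ring_trivial_idem TYPE('r)" and "nontriv_ring_trivial_idem TYPE('s)"
    and "nontriv_ring_trivial_idem TYPE('r2)" and "nontriv_ring_trivial_idem TYPE('s2)"
    and "bimodule lM rM" and "bimodule lN rN" and "bimodule lM' rM'" and "bimodule lN' rN'"
    and "morita_ring_iso lM rM lN rN lM' rM' lN' rN' \<phi>"
  shows "(\<exists>(u1 :: 'm \<Rightarrow> 'm2) (v1 :: 'n \<Rightarrow> 'n2). \<forall>m n.
            \<phi> (1, m, 0, 0) = (1, u1 m, v1 0, 0) \<and> \<phi> (1, 0, n, 0) = (1, u1 0, v1 n, 0))
       \<or> (\<exists>(u2 :: 'n \<Rightarrow> 'm2) (v2 :: 'm \<Rightarrow> 'n2). \<forall>m n.
            \<phi> (1, m, 0, 0) = (0, u2 0, v2 m, 1) \<and> \<phi> (1, 0, n, 0) = (0, u2 n, v2 0, 1))"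
proof -
  obtain a1 a b a2 where E: "\<phi> (1, 0, 0, 0) = (a1, a, b, a2)" by (cases "\<phi> (1, 0, 0, 0)") auto
  have e11: "morita_mult lM' rM' lN' rN' (a1, a, b, a2) (a1, a, b, a2) = (a1, a, b, a2)"
    "(a1, a, b, a2) \<noteq> (0, 0, 0, 0)" "(a1, a, b, a2) \<noteq> (1, 0, 0, 1)"
    using iso_image_e11[OF assms(1,2,5,6,9)] unfolding E by auto
  from morita_idempotent_diagonal[OF assms(3,4,7,8) e11] show ?thesis
  proof
    assume "a1 = 1 \<and> a2 = 0"
    with E have E1: "\<phi> (1, 0, 0, 0) = (1, a, b, 0)" by simp
    obtain u v where "\<forall>m. \<phi> (1, m, 0, 0) = (1, u m, b, 0)" "\<forall>n. \<phi> (1, 0, n, 0) = (1, a, v n, 0)"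
      using iso_images_upper[OF assms(5-9) E1] by metis
    moreover from this E1 have "u 0 = a" "v 0 = b" by (metis prod.inject)+
    ultimately show ?thesis by (intro disjI1 exI[of _ u] exI[of _ v]) simp
  next
    assume "a1 = 0 \<and> a2 = 1"
    with E have E2: "\<phi> (1, 0, 0, 0) = (0, a, b, 1)" by simp
    obtain u v where "\<forall>n. \<phi> (1, 0, n, 0) = (0, u n, b, 1)" "\<forall>m. \<phi> (1, m, 0, 0) = (0, a, v m, 1)"
      using iso_images_lower[OF assms(5-9) E2] by metis
    moreover from this E2 have "u 0 = a" "v 0 = b" by (metis prod.inject)+
    ultimately show ?thesis by (intro disjI2 exI[of _ u] exI[of _ v]) simp
  qed
qed

end
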